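(* There exists $D>0$ independent of $n$ such that, for Pólya trees $t$ with $D\le |t|\le n$, \[ [z^n]S_t(z) = \frac{\tilde\rho^{-n}}{n}\left(1+\mathcal{O}\!\left(\frac{1}{\sqrt{\ln n}}\right)\right) \quad\text{as } n\to\infty, \] where the $\mathcal{O}$-term is uniform in $t$ with $D\le|t|\le n$ and $\tilde\rho=\tilde\rho(t)$ is the smallest positive real number satisfying $\int_0^{\tilde\rho} e^{-w(t)v^{|t|}}\,dv=1$.
   Context: A Pólya tree is an unlabeled rooted non-plane tree; $|t|$ is its number of nodes. A recursive tree is a rooted non-plane tree whose $n$ nodes are labeled $1,\dots,n$ increasingly along every path from the root. For a Pólya tree $t$ with $k$ nodes, $\ell(t)$ is the number of increasing labelings of $t$, $w(t)=\ell(t)/k!$, and $S_t(z)=\ln\frac{1}{1-G(z)}-w(t)z^k$ with $G(z)=\int_0^z e^{-w(t)v^k}\,dv$ (an entire function) is the exponential generating function of recursive trees having no fringe subtree (node together with all descendants) of shape $t$; $\tilde\rho$ is its dominant singularity. *)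

theory Defs
  imports "HOL-Analysis.Analysis" "HOL-Library.Multiset"
    "HOL-Computational_Algebra.Formal_Power_Series"
begin

text \<open>Polya trees: unlabeled rooted non-plane trees; the children of a node
  form a multiset of subtrees.\<close>
datatype ptree = PNode "ptree multiset"

function psize :: "ptree \<Rightarrow> nat" where
  "psize (PNode M) = 1 + sum_mset (image_mset psize M)"
  by pat_completeness auto
termination
proof (relation "Wellfounded.measure size")
  fix M :: "ptree multiset" and z assume "z \<in># M"
  then obtain M' where "M = add_mset z M'" by (metis multi_member_split)
  then show "(z, PNode M) \<in> Wellfounded.measure size" by simp
qed auto

text \<open>Recursive trees on nodes 1..n: node 1 is the root and every node i with
  2 \<le> i \<le> n has a parent p i with 1 \<le> p i < i (labels increase along every
  path from the root).  Outside 2..n the parent function is fixed to 0 so that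
  recursive trees correspond bijectively to parent functions.\<close>
definition rec_trees :: "nat \<Rightarrow> (nat \<Rightarrow> nat) set" where
  "rec_trees n = {p. (\<forall>i. 2 \<le> i \<and> i \<le> n \<longrightarrow> 1 \<le> p i \<and> p i < i)
                    \<and> (\<forall>i. \<not> (2 \<le> i \<and> i \<le> n) \<longrightarrow> p i = 0)}"

function shape_at :: "(nat \<Rightarrow> nat) \<Rightarrow> nat \<Rightarrow> nat \<Rightarrow> ptree" where
  "shape_at p n v =
     PNode (image_mset (shape_at p n) (mset_set {i. v < i \<and> i \<le> n \<and> p i = v}))"
  by pat_completeness auto
termination
  by (relation "Wellfounded.measure (\<lambda>(p, n, v). n - v)") auto

definition num_inc_labelings :: "ptree \<Rightarrow> nat" where
  "num_inc_labelings t =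
     card {p \<in> rec_trees (psize t). shape_at p (psize t) 1 = t}"

definition wt :: "ptree \<Rightarrow> real" where
  "wt t = real (num_inc_labelings t) / fact (psize t)"

definition G_fps :: "ptree \<Rightarrow> real fps" where
  "G_fps t = fps_integral (fps_exp (- wt t) oo fps_X ^ psize t) 0"

text \<open>S_t(z) = ln(1/(1 - G(z))) - w(t) z^k, where ln(1/(1-x)) = - ln(1 + (-x)).\<close>
definition S_fps :: "ptree \<Rightarrow> real fps" where
  "S_fps t = - (fps_ln 1 oo (- G_fps t)) - fps_const (wt t) * fps_X ^ psize t"

definition rho_t :: "ptree \<Rightarrow> real" where
  "rho_t t = Inf {r. 0 < r \<and> integral {0..r} (\<lambda>v. exp (- wt t * v ^ psize t)) = 1}"

end

theory Submission
  imports Defs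
begin

text \<open>Let k = |t|, w = w(t), \<rho> = \<tilde>\<rho>(t) and f = ln (1 / (1 - G)), so that f' (1 - G) = G'.
  At the singularity the numbers p l = [z^l] G \<rho>^l sum to G(\<rho>) = 1, and
  a m = (m + 1) [z^(m+1)] f \<rho>^(m+1) is the renewal sequence with increments p; hence the errors
  a m - 1 satisfy a convolution recurrence driven by the tails T i = 1 - (p 0 + ... + p i).
  Because G(z) = z - w z^(k+1) / (k+1) + ..., the tail T i is of order (w \<rho>^k)^\<lceil>i/k\<rceil> / (\<lceil>i/k\<rceil> k),
  and an induction gives |a m - 1| \<le> (e^16 w \<rho>^k)^\<lceil>(m+1)/k\<rceil>.

  The weight is small: in an increasing labelling node 2 is a child of the root, and exactly (k-2)!
  recursive trees of size k give its fringe subtree a prescribed size, so l(t) \<le> c (k-2)! where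
  c(c+1)/2 \<le> k - 1 bounds the number c of distinct sizes of root subtrees; thus (k w)^2 (k-1) \<le> 2.
  Consequently w \<rho>^k = O(1/k), the relative error of [z^n] f is O(1/n), and the term w z^k of S_t
  contributes a relative error O(n^(-1/2)) = O(1 / sqrt (ln n)).\<close>

section \<open>Descendants in a recursive tree\<close>

function is_desc :: "(nat \<Rightarrow> nat) \<Rightarrow> nat \<Rightarrow> nat \<Rightarrow> bool" where
  "is_desc p v i =
     (if i = v then True else if v < i \<and> p i < i then is_desc p v (p i) else False)"
  by pat_completeness auto
termination by (relation "Wellfounded.measure (\<lambda>(p, v, i). i)") auto

declare is_desc.simps[simp del]

lemma is_desc_refl[simp]: "is_desc p v v"
  by (subst is_desc.simps) simp

lemma is_desc_le: "is_desc p v i \<Longrightarrow> v \<le> i"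
proof (induction i rule: less_induct)
  case (less i)
  then show ?case by (subst (asm) is_desc.simps) (auto split: if_splits)
qed

lemma is_desc_parent:
  "is_desc p v i \<Longrightarrow> i \<noteq> v \<Longrightarrow> v < i \<and> p i < i \<and> is_desc p v (p i)"
  by (subst (asm) is_desc.simps) (auto split: if_splits)

lemma is_desc_child: "v < c \<Longrightarrow> p c = v \<Longrightarrow> is_desc p v c"
  by (subst is_desc.simps) auto

lemma is_desc_trans: "is_desc p a b \<Longrightarrow> is_desc p b i \<Longrightarrow> is_desc p a i"
proof (induction i rule: less_induct)
  case (less i)
  show ?case
  proof (cases "i = b")
    case False
    with less.prems(2) have i: "b < i" "p i < i" "is_desc p b (p i)"
      by (auto dest: is_desc_parent)
    have "is_desc p a (p i)" using less.IH[OF i(2) less.prems(1) i(3)] .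
    moreover have "a < i" using is_desc_le[OF less.prems(1)] i(1) by simp
    ultimately show ?thesis using i(2) by (subst is_desc.simps) auto
  qed (use less in simp)
qed

lemma is_desc_linear: "is_desc p a i \<Longrightarrow> is_desc p b i \<Longrightarrow> a \<le> b \<Longrightarrow> is_desc p a b"
proof (induction i rule: less_induct)
  case (less i)
  show ?case
  proof (cases "b = i")
    case False
    with less.prems(2) have i: "b < i" "p i < i" "is_desc p b (p i)"
      by (auto dest: is_desc_parent)
    have "a \<noteq> i" using i(1) less.prems(3) by simp
    with less.prems(1) have "is_desc p a (p i)" by (auto dest: is_desc_parent)
    then show ?thesis using less.IH[OF i(2) _ i(3) less.prems(3)] by simp
  qed (use less in simp)
qed

lemma is_desc_via_child:
  "is_desc p v i \<Longrightarrow> i \<noteq> v \<Longrightarrow> \<exists>c. v < c \<and> c \<le> i \<and> p c = v \<and> is_desc p c i"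
proof (induction i rule: less_induct)
  case (less i)
  from is_desc_parent[OF less.prems] have i: "v < i" "p i < i" "is_desc p v (p i)" by auto
  show ?case
  proof (cases "p i = v")
    case True then show ?thesis using i by (intro exI[of _ i]) auto
  next
    case False
    from less.IH[OF i(2) i(3) False] obtain c
      where c: "v < c" "c \<le> p i" "p c = v" "is_desc p c (p i)"
      by blast
    have "is_desc p c i" using c(2) i(2) c(4) by (subst is_desc.simps) auto
    then show ?thesis using c i by (intro exI[of _ c]) auto
  qed
qed

lemma is_desc_fun_upd: "i \<le> k \<Longrightarrow> is_desc (p(Suc k := q)) v i = is_desc p v i"
proof (induction i rule: less_induct)
  case (less i)
  have "p i < i \<Longrightarrow> is_desc (p(Suc k := q)) v (p i) = is_desc p v (p i)"
    using less by (simp add: fun_upd_def)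
  moreover have "(p(Suc k := q)) i = p i" using less.prems by simp
  ultimately show ?case by (subst (1 2) is_desc.simps) auto
qed

definition descendants :: "(nat \<Rightarrow> nat) \<Rightarrow> nat \<Rightarrow> nat \<Rightarrow> nat set" where
  "descendants p n v = {i. i \<le> n \<and> is_desc p v i}"

definition children :: "(nat \<Rightarrow> nat) \<Rightarrow> nat \<Rightarrow> nat \<Rightarrow> nat set" where
  "children p n v = {i. v < i \<and> i \<le> n \<and> p i = v}"

lemma finite_descendants[simp]: "finite (descendants p n v)"
  unfolding descendants_def by auto

lemma finite_children[simp]: "finite (children p n v)"
  unfolding children_def by auto

lemma descendants_subset: "descendants p n v \<subseteq> {v..n}"
  by (auto simp: descendants_def dest: is_desc_le)

lemma descendants_eq_insert_UN:
  assumes "v \<le> n"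
  shows "descendants p n v = insert v (\<Union>c\<in>children p n v. descendants p n c)"
proof (intro equalityI subsetI)
  fix i assume "i \<in> descendants p n v"
  then have i: "i \<le> n" "is_desc p v i" by (auto simp: descendants_def)
  show "i \<in> insert v (\<Union>c\<in>children p n v. descendants p n c)"
  proof (cases "i = v")
    case False
    from is_desc_via_child[OF i(2) False] obtain c
      where "v < c" "c \<le> i" "p c = v" "is_desc p c i"
      by blast
    then show ?thesis using i by (auto simp: descendants_def children_def)
  qed simp
next
  fix i assume "i \<in> insert v (\<Union>c\<in>children p n v. descendants p n c)"
  then show "i \<in> descendants p n v"
    using assms
    by (auto simp: descendants_def children_def intro: is_desc_trans[OF is_desc_child])
qed

lemma descendants_children_disjoint:
  assumes "c \<in> children p n v" "c' \<in> children p n v" "c \<noteq> c'"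
  shows "descendants p n c \<inter> descendants p n c' = {}"
proof -
  have False
    if "a \<in> children p n v" "b \<in> children p n v" "a < b" "is_desc p a i" "is_desc p b i"
    for a b i
  proof -
    have "is_desc p a b" using is_desc_linear[OF that(4,5)] that(3) by simp
    then have "is_desc p a (p b)" using is_desc_parent[of p a b] that(3) by auto
    then show False using is_desc_le[of p a "p b"] that(1,2) by (auto simp: children_def)
  qed
  then show ?thesis
    using assms by (auto simp: descendants_def) (metis linorder_neqE_nat)
qed

lemma shape_at_children:
  "shape_at p n v = PNode (image_mset (shape_at p n) (mset_set (children p n v)))"
  by (subst shape_at.simps) (simp add: children_def)

lemma psize_shape_at: "v \<le> n \<Longrightarrow> psize (shape_at p n v) = card (descendants p n v)"
proof (induction p n v rule: shape_at.induct)
  case (1 p n v)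
  have IH: "\<And>c. c \<in> children p n v \<Longrightarrow> psize (shape_at p n c) = card (descendants p n c)"
    using 1 by (auto simp: children_def)
  have "psize (shape_at p n v) = 1 + (\<Sum>c\<in>children p n v. psize (shape_at p n c))"
    by (subst shape_at_children)
       (simp del: shape_at.simps add: sum_unfold_sum_mset image_mset.compositionality comp_def)
  also have "(\<Sum>c\<in>children p n v. psize (shape_at p n c))
      = card (\<Union>c\<in>children p n v. descendants p n c)"
    using IH descendants_children_disjoint by (simp add: card_UN_disjoint)
  also have "1 + card (\<Union>c\<in>children p n v. descendants p n c) = card (descendants p n v)"
  proof -
    have "v \<notin> (\<Union>c\<in>children p n v. descendants p n c)"
      by (auto simp: children_def descendants_def dest: is_desc_le)
    then show ?thesis using descendants_eq_insert_UN[OF 1(2), of p] by simp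
  qed
  finally show ?case .
qed

lemma descendants_fun_upd:
  assumes "v \<le> k" "q \<le> k"
  shows "descendants (p(Suc k := q)) (Suc k) v
           = descendants p k v \<union> (if is_desc p v q then {Suc k} else {})"
proof -
  have "is_desc (p(Suc k := q)) v (Suc k) = is_desc p v q"
    using assms by (subst is_desc.simps) (simp add: is_desc_fun_upd)
  then show ?thesis
    using assms is_desc_fun_upd[of _ k p q v] unfolding descendants_def
    by (auto simp: le_Suc_eq)
qed

lemma card_descendants_fun_upd:
  assumes "v \<le> k" "q \<le> k"
  shows "card (descendants (p(Suc k := q)) (Suc k) v)
           = card (descendants p k v) + (if q \<in> descendants p k v then 1 else 0)"
proof -
  have "Suc k \<notin> descendants p k v" by (auto simp: descendants_def)
  then show ?thesis
    using descendants_fun_upd[OF assms, of p] assms by (auto simp: descendants_def)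
qed

section \<open>Counting recursive trees\<close>

lemma rec_trees_1: "rec_trees 1 = {\<lambda>_. 0}"
  unfolding rec_trees_def by (auto simp: fun_eq_iff)

lemma rec_trees_Suc:
  assumes "k \<ge> 1"
  shows "rec_trees (Suc k) = (\<lambda>(p, q). p(Suc k := q)) ` (rec_trees k \<times> {1..k})"
proof (intro equalityI subsetI)
  fix p' assume p': "p' \<in> rec_trees (Suc k)"
  have "p'(Suc k := 0) \<in> rec_trees k" using p' unfolding rec_trees_def
    by (auto simp: le_Suc_eq)
  moreover have "p' (Suc k) \<in> {1..k}" using p' assms unfolding rec_trees_def
    by (auto dest!: spec[of _ "Suc k"])
  moreover have "p' = (\<lambda>(p, q). p(Suc k := q)) (p'(Suc k := 0), p' (Suc k))" by simp
  ultimately show "p' \<in> (\<lambda>(p, q). p(Suc k := q)) ` (rec_trees k \<times> {1..k})"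
    by blast
next
  fix p' assume "p' \<in> (\<lambda>(p, q). p(Suc k := q)) ` (rec_trees k \<times> {1..k})"
  then show "p' \<in> rec_trees (Suc k)" unfolding rec_trees_def
    by (auto simp: le_Suc_eq)
qed

lemma inj_on_rec_trees_Suc: "inj_on (\<lambda>(p, q). p(Suc k := q)) (rec_trees k \<times> {1..k})"
proof (rule inj_onI, clarify)
  fix p q p' q'
  assume pq: "p \<in> rec_trees k" "p' \<in> rec_trees k" "p(Suc k := q) = p'(Suc k := q')"
  have "p (Suc k) = 0" "p' (Suc k) = 0" using pq(1,2) unfolding rec_trees_def by auto
  then show "p = p' \<and> q = q'" using pq(3)
    by (metis fun_upd_idem fun_upd_upd fun_upd_same)
qed

lemma finite_rec_trees: "finite (rec_trees k)"
proof (induction k)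
  case 0
  have "rec_trees 0 = {\<lambda>_. 0}" unfolding rec_trees_def by (auto simp: fun_eq_iff)
  then show ?case by simp
next
  case (Suc k)
  then show ?case using rec_trees_1 rec_trees_Suc[of k] by (cases "k = 0") simp_all
qed

lemma card_rec_trees_Suc_filter:
  assumes "k \<ge> 1"
  shows "card {p' \<in> rec_trees (Suc k). P p'}
           = (\<Sum>p\<in>rec_trees k. card {q \<in> {1..k}. P (p(Suc k := q))})"
proof -
  let ?A = "SIGMA p:rec_trees k. {q \<in> {1..k}. P (p(Suc k := q))}"
  have "{p' \<in> rec_trees (Suc k). P p'} = (\<lambda>(p, q). p(Suc k := q)) ` ?A"
    unfolding rec_trees_Suc[OF assms] by auto
  then have "card {p' \<in> rec_trees (Suc k). P p'} = card ((\<lambda>(p, q). p(Suc k := q)) ` ?A)"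
    by simp
  also have "\<dots> = card ?A"
    by (rule card_image, rule inj_on_subset[OF inj_on_rec_trees_Suc]) auto
  also have "\<dots> = (\<Sum>p\<in>rec_trees k. card {q \<in> {1..k}. P (p(Suc k := q))})"
    by (rule card_SigmaI) (auto simp: finite_rec_trees)
  finally show ?thesis .
qed

definition subtree2_count :: "nat \<Rightarrow> nat \<Rightarrow> nat" where
  "subtree2_count k s = card {p \<in> rec_trees k. card (descendants p k 2) = s}"

lemma card_filter_plus_indicator:
  assumes "D \<subseteq> {1..k}" "card D = c"
  shows "card {q \<in> {1..k}. c + (if q \<in> D then 1 else 0) = s}
           = (if c + 1 = s then c else 0) + (if c = s then k - c else 0)"
proof -
  have fD: "finite D" using assms(1) finite_subset by blast
  consider "s = c" | "s = c + 1" | "s \<noteq> c \<and> s \<noteq> c + 1" by blast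
  then show ?thesis
  proof cases
    case 1
    then have "{q \<in> {1..k}. c + (if q \<in> D then 1 else 0) = s} = {1..k} - D" by auto
    then show ?thesis using 1 assms card_Diff_subset[OF fD assms(1)] by simp
  next
    case 2
    then have "{q \<in> {1..k}. c + (if q \<in> D then 1 else 0) = s} = D" using assms(1) by auto
    then show ?thesis using 2 assms by simp
  qed auto
qed

lemma subtree2_count_Suc:
  assumes k: "k \<ge> 2"
  shows "subtree2_count (Suc k) s
           = (if 1 \<le> s then (s - 1) * subtree2_count k (s - 1) else 0) + (k - s) * subtree2_count k s"
proof -
  let ?c = "\<lambda>p. card (descendants p k 2)"
  let ?P = "\<lambda>p q. ?c p + (if q \<in> descendants p k 2 then 1 else 0) = s"
  have "subtree2_count (Suc k) s
          = (\<Sum>p\<in>rec_trees k. card {q \<in> {1..k}. card (descendants (p(Suc k := q)) (Suc k) 2) = s})"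
    unfolding subtree2_count_def using k by (intro card_rec_trees_Suc_filter) simp
  also have "\<dots> = (\<Sum>p\<in>rec_trees k. card {q \<in> {1..k}. ?P p q})"
  proof (rule sum.cong[OF refl])
    fix p
    show "card {q \<in> {1..k}. card (descendants (p(Suc k := q)) (Suc k) 2) = s}
            = card {q \<in> {1..k}. ?P p q}"
      using card_descendants_fun_upd[of 2 k _ p] k by (intro arg_cong[where f = card]) auto
  qed
  also have "\<dots> = (\<Sum>p\<in>rec_trees k.
      (if ?c p + 1 = s then ?c p else 0) + (if ?c p = s then k - ?c p else 0))"
  proof (rule sum.cong[OF refl])
    fix p
    have "descendants p k 2 \<subseteq> {1..k}" using descendants_subset[of p k 2] by auto
    then show "card {q \<in> {1..k}. ?P p q}
        = (if ?c p + 1 = s then ?c p else 0) + (if ?c p = s then k - ?c p else 0)"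
      by (rule card_filter_plus_indicator) simp
  qed
  also have "\<dots> = (\<Sum>p\<in>rec_trees k. (if ?c p + 1 = s then s - 1 else 0))
                  + (\<Sum>p\<in>rec_trees k. (if ?c p = s then k - s else 0))"
    by (subst sum.distrib[symmetric]) (rule sum.cong, auto)
  also have "(\<Sum>p\<in>rec_trees k. (if ?c p + 1 = s then s - 1 else 0))
               = (if 1 \<le> s then (s - 1) * subtree2_count k (s - 1) else 0)"
  proof (cases "1 \<le> s")
    case True
    then have "(\<Sum>p\<in>rec_trees k. (if ?c p + 1 = s then s - 1 else 0))
                 = (\<Sum>p\<in>rec_trees k. (if ?c p = s - 1 then s - 1 else 0))"
      by (intro sum.cong) auto
    also have "\<dots> = (\<Sum>p\<in>{p \<in> rec_trees k. ?c p = s - 1}. s - 1)"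
      by (subst sum.inter_filter[symmetric]) (auto simp: finite_rec_trees)
    finally show ?thesis using True by (simp add: subtree2_count_def)
  qed auto
  also have "(\<Sum>p\<in>rec_trees k. (if ?c p = s then k - s else 0)) = (k - s) * subtree2_count k s"
    by (simp add: sum.inter_filter[symmetric] finite_rec_trees subtree2_count_def)
  finally show ?thesis .
qed

lemma subtree2_count:
  "k \<ge> 2 \<Longrightarrow> subtree2_count k s = (if 1 \<le> s \<and> s \<le> k - 1 then fact (k - 2) else 0)"
proof (induction k arbitrary: s rule: nat_induct_at_least)
  case base
  let ?p = "(\<lambda>_. 0)(2 := 1) :: nat \<Rightarrow> nat"
  have "rec_trees 2 = {?p}"
    using rec_trees_Suc[of 1] rec_trees_1 by (simp add: numeral_2_eq_2)
  moreover have "descendants ?p 2 2 = {2}"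
    using descendants_subset[of ?p 2 2] by (auto simp: descendants_def)
  ultimately have "{p \<in> rec_trees 2. card (descendants p 2 2) = s} = (if s = 1 then {?p} else {})"
    by auto
  then show ?case by (simp add: subtree2_count_def)
next
  case (Suc k)
  have fact_Suc_k: "fact (Suc k - 2) = (k - 1) * (fact (k - 2) :: nat)"
  proof -
    have "Suc k - 2 = Suc (k - 2)" "k - 1 = Suc (k - 2)" using Suc(1) by auto
    then show ?thesis by (simp only: fact_Suc) simp
  qed
  consider "s = 0" | "s = 1" | "2 \<le> s \<and> s \<le> k - 1" | "s = k" | "s > k"
    using Suc(1) by linarith
  then show ?case
  proof cases
    case 3
    then have "1 \<le> s - 1" "s - 1 \<le> k - 1" "1 \<le> s" "s \<le> k - 1" by linarith+
    then have "subtree2_count (Suc k) s = (s - 1) * fact (k - 2) + (k - s) * fact (k - 2)"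
      using Suc by (simp only: subtree2_count_Suc if_True simp_thms)
    also have "\<dots> = ((s - 1) + (k - s)) * fact (k - 2)"
      by (simp only: add_mult_distrib)
    also have "(s - 1) + (k - s) = k - 1" using 3 by linarith
    also have "(k - 1) * fact (k - 2) = fact (Suc k - 2)" by (rule fact_Suc_k[symmetric])
    finally show ?thesis using 3 by (simp; linarith)
  qed (use Suc in \<open>auto simp: subtree2_count_Suc fact_Suc_k[simplified]\<close>)
qed


section \<open>The weight of a large tree is small\<close>

lemma triangular_card_le_sum:
  fixes S :: "nat set"
  assumes "finite S" "0 \<notin> S"
  shows "card S * Suc (card S) \<le> 2 * \<Sum>S"
  using assms
proof (induction "card S" arbitrary: S)
  case (Suc c)
  define m where "m = Max S"
  have "S \<noteq> {}" using Suc(2) by auto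
  then have mS: "m \<in> S" using Suc(3) by (simp add: m_def)
  have "S \<subseteq> {1..m}"
    using Suc(3,4) by (auto simp: m_def Suc_le_eq intro: Max_ge) (metis gr0I)
  then have card_le_m: "card S \<le> m" using card_mono[of "{1..m}" S] by simp
  have c: "c = card (S - {m})" using Suc(2) mS Suc(3) by simp
  have IH: "card (S - {m}) * Suc (card (S - {m})) \<le> 2 * \<Sum>(S - {m})"
    using Suc(1)[OF c] Suc(3,4) by auto
  have "\<Sum>S = m + \<Sum>(S - {m})" using mS Suc(3) by (simp add: sum.remove)
  then show ?case using IH card_le_m c Suc(2)[symmetric] by (simp add: algebra_simps)
qed simp

lemma psize_pos: "0 < psize t"
  by (cases t) simp

lemma sum_image_set_mset_le:
  fixes f :: "'a \<Rightarrow> nat"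
  shows "(\<Sum>y\<in>f ` set_mset M. y) \<le> sum_mset (image_mset f M)"
proof (induction M)
  case (add x M)
  have "(\<Sum>y\<in>f ` set_mset (add_mset x M). y) \<le> f x + (\<Sum>y\<in>f ` set_mset M. y)"
    by (simp add: sum.insert_if)
  then show ?case using add by simp
qed simp

lemma num_inc_labelings_le:
  assumes t: "t = PNode M" and k: "psize t = k" "k \<ge> 2"
  shows "num_inc_labelings t \<le> card (psize ` set_mset M) * fact (k - 2)"
proof -
  let ?S = "psize ` set_mset M"
  have "{p \<in> rec_trees k. shape_at p k 1 = t}
          \<subseteq> (\<Union>s\<in>?S. {p \<in> rec_trees k. card (descendants p k 2) = s})"
  proof
    fix p assume p: "p \<in> {p \<in> rec_trees k. shape_at p k 1 = t}"
    then have "2 \<in> children p k 1"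
      using k(2) unfolding rec_trees_def children_def by (auto dest!: spec[of _ 2])
    moreover have "M = image_mset (shape_at p k) (mset_set (children p k 1))"
      using p t shape_at_children[of p k 1] by simp
    ultimately have "shape_at p k 2 \<in># M" by simp
    moreover have "psize (shape_at p k 2) = card (descendants p k 2)"
      using psize_shape_at k(2) by simp
    ultimately show "p \<in> (\<Union>s\<in>?S. {p \<in> rec_trees k. card (descendants p k 2) = s})"
      using p by force
  qed
  then have "num_inc_labelings t
      \<le> card (\<Union>s\<in>?S. {p \<in> rec_trees k. card (descendants p k 2) = s})"
    unfolding num_inc_labelings_def k(1) by (rule card_mono[rotated]) (auto simp: finite_rec_trees)
  also have "\<dots> \<le> (\<Sum>s\<in>?S. subtree2_count k s)"
    unfolding subtree2_count_def by (rule card_UN_le) simp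
  also have "\<dots> \<le> (\<Sum>s\<in>?S. fact (k - 2))"
    by (rule sum_mono) (simp add: subtree2_count[OF k(2)])
  finally show ?thesis by simp
qed

lemma wt_squared_bound:
  assumes k: "psize t = k" "k \<ge> 2"
  shows "(real k * wt t)\<^sup>2 * (real k - 1) \<le> 2"
proof -
  obtain M where t: "t = PNode M" by (cases t)
  let ?c = "card (psize ` set_mset M)"
  have "\<Sum>(psize ` set_mset M) \<le> k - 1"
    using sum_image_set_mset_le[of psize M] k(1) t by simp
  moreover have "0 \<notin> psize ` set_mset M"
    using psize_pos by (metis imageE less_irrefl)
  ultimately have c: "?c * Suc ?c \<le> 2 * (k - 1)"
    using triangular_card_le_sum[of "psize ` set_mset M"] by simp
  have fact_k: "fact k = real k * (real k - 1) * fact (k - 2)"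
  proof -
    obtain j where "k = Suc (Suc j)" using k(2) by (metis add_2_eq_Suc le_Suc_ex)
    then show ?thesis by (simp add: algebra_simps)
  qed
  have "real k * wt t = real (num_inc_labelings t) / ((real k - 1) * fact (k - 2))"
    using k(2) by (simp add: wt_def k(1) fact_k field_simps)
  also have "\<dots> \<le> real ?c * fact (k - 2) / ((real k - 1) * fact (k - 2))"
  proof -
    have "real (num_inc_labelings t) \<le> real ?c * fact (k - 2)"
      using num_inc_labelings_le[OF t k] by (metis of_nat_fact of_nat_le_iff of_nat_mult)
    then show ?thesis using k(2) by (intro divide_right_mono) auto
  qed
  finally have "real k * wt t \<le> real ?c / (real k - 1)" by simp
  moreover have "0 \<le> real k * wt t" by (simp add: wt_def)
  ultimately have "(real k * wt t)\<^sup>2 * (real k - 1) \<le> (real ?c / (real k - 1))\<^sup>2 * (real k - 1)"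
    using k(2) by (intro mult_right_mono power_mono) auto
  also have "\<dots> = real ?c ^ 2 / (real k - 1)"
    using k(2) by (simp add: power2_eq_square)
  also have "\<dots> \<le> 2"
  proof -
    have "real ?c ^ 2 \<le> real (?c * Suc ?c)" by (simp add: power2_eq_square algebra_simps)
    also have "\<dots> \<le> real (2 * (k - 1))" using c by linarith
    also have "\<dots> = 2 * (real k - 1)" using k(2) by (simp add: of_nat_diff)
    finally show ?thesis using k(2) by (simp add: field_simps)
  qed
  finally show ?thesis .
qed

lemma wt_sqrt_bound:
  assumes "psize t \<ge> 2"
  shows "real (psize t) * wt t * sqrt (real (psize t)) \<le> 2"
proof -
  let ?k = "real (psize t)"
  have "(?k * wt t * sqrt ?k)\<^sup>2 = (?k * wt t)\<^sup>2 * ?k"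
    by (simp add: power_mult_distrib)
  also have "\<dots> \<le> (?k * wt t)\<^sup>2 * (2 * (?k - 1))"
    using assms by (intro mult_left_mono) auto
  also have "\<dots> = 2 * ((?k * wt t)\<^sup>2 * (?k - 1))"
    by simp
  also have "\<dots> \<le> 4"
    using wt_squared_bound[OF refl assms] by linarith
  finally have "(?k * wt t * sqrt ?k)\<^sup>2 \<le> 2\<^sup>2" by simp
  then show ?thesis by (rule power2_le_imp_le) simp
qed


section \<open>The function G on the real line and the singularity \<tilde>\<rho>\<close>

definition exp_pow_coeff :: "real \<Rightarrow> nat \<Rightarrow> nat \<Rightarrow> real" where
  "exp_pow_coeff c k m = (if k dvd m then c ^ (m div k) / fact (m div k) else 0)"

lemma fps_nth_exp_compose_X_power:
  assumes k: "0 < k"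
  shows "fps_nth (fps_exp c oo fps_X ^ k) m = exp_pow_coeff c k m"
proof -
  have "fps_nth (fps_exp c oo fps_X ^ k) m
          = (\<Sum>i=0..m. fps_nth (fps_exp c) i * (if m = k * i then 1 else 0))"
    by (simp add: fps_compose_nth power_mult[symmetric])
  also have "\<dots> = (\<Sum>i=0..m. if i = m div k \<and> k dvd m then c ^ i / fact i else 0)"
    using k by (intro sum.cong refl) auto
  also have "\<dots> = exp_pow_coeff c k m"
    by (simp add: exp_pow_coeff_def)
  finally show ?thesis .
qed

lemma exp_pow_coeff_sums:
  assumes k: "0 < k"
  shows "(\<lambda>m. exp_pow_coeff c k m * z ^ m) sums exp (c * z ^ k)"
proof -
  have "(\<lambda>j. exp_pow_coeff c k (j * k) * z ^ (j * k)) = (\<lambda>j. (c * z ^ k) ^ j /\<^sub>R fact j)"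
  proof -
    have pc: "(z ^ j) ^ k = (z ^ k) ^ j" for j by (simp add: power_mult[symmetric] mult.commute)
    show ?thesis
      using k by (auto simp: exp_pow_coeff_def fun_eq_iff power_mult power_mult_distrib
          mult.commute[of j k] divide_inverse pc)
  qed
  then have "(\<lambda>j. exp_pow_coeff c k (j * k) * z ^ (j * k)) sums exp (c * z ^ k)"
    using exp_converges[of "c * z ^ k"] by simp
  moreover have "strict_mono (\<lambda>j. j * k)" using k by (intro strict_monoI) simp
  moreover have "\<And>m. m \<notin> range (\<lambda>j. j * k) \<Longrightarrow> exp_pow_coeff c k m * z ^ m = 0"
    by (auto simp: exp_pow_coeff_def elim!: dvdE)
  ultimately show ?thesis
    using sums_mono_reindex[of "\<lambda>j. j * k" "\<lambda>m. exp_pow_coeff c k m * z ^ m"] by simp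
qed

definition G_coeff :: "real \<Rightarrow> nat \<Rightarrow> nat \<Rightarrow> real" where
  "G_coeff w k l = (if l = 0 then 0 else exp_pow_coeff (- w) k (l - 1) / real l)"

lemma fps_nth_G_fps: "fps_nth (G_fps t) l = G_coeff (wt t) (psize t) l"
  using fps_nth_exp_compose_X_power[OF psize_pos]
  by (simp add: G_fps_def G_coeff_def fps_integral_def field_simps)

lemma summable_G_coeff:
  assumes k: "0 < k"
  shows "summable (\<lambda>l. G_coeff w k l * z ^ l)"
proof -
  have "(\<lambda>m. exp_pow_coeff \<bar>w\<bar> k m * \<bar>z\<bar> ^ m) sums exp (\<bar>w\<bar> * \<bar>z\<bar> ^ k)"
    by (rule exp_pow_coeff_sums[OF k])
  then have "summable (\<lambda>m. \<bar>z\<bar> * (exp_pow_coeff \<bar>w\<bar> k m * \<bar>z\<bar> ^ m))"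
    by (intro summable_mult sums_summable)
  moreover have "norm (G_coeff w k (Suc m) * z ^ Suc m)
                   \<le> \<bar>z\<bar> * (exp_pow_coeff \<bar>w\<bar> k m * \<bar>z\<bar> ^ m)" for m
  proof -
    have "norm (G_coeff w k (Suc m) * z ^ Suc m)
            = \<bar>z\<bar> * (exp_pow_coeff \<bar>w\<bar> k m * \<bar>z\<bar> ^ m) / real (Suc m)"
      by (simp add: G_coeff_def exp_pow_coeff_def abs_mult power_abs)
    also have "\<dots> \<le> \<bar>z\<bar> * (exp_pow_coeff \<bar>w\<bar> k m * \<bar>z\<bar> ^ m) / 1"
      by (intro divide_left_mono) (auto simp: exp_pow_coeff_def)
    finally show ?thesis by simp
  qed
  ultimately have "summable (\<lambda>m. G_coeff w k (Suc m) * z ^ Suc m)"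
    by (rule summable_comparison_test'[where N = 0])
  then show ?thesis by (subst summable_Suc_iff[symmetric])
qed

definition G_fun :: "real \<Rightarrow> nat \<Rightarrow> real \<Rightarrow> real" where
  "G_fun w k r = (\<Sum>l. G_coeff w k l * r ^ l)"

lemma G_fun_0[simp]: "G_fun w k 0 = 0"
  by (simp add: G_fun_def G_coeff_def)

lemma G_fun_has_derivative:
  assumes k: "0 < k"
  shows "(G_fun w k has_real_derivative exp (- w * r ^ k)) (at r within A)"
proof -
  have "conv_radius (G_coeff w k) = \<infinity>"
    by (rule conv_radius_inftyI'') (rule summable_G_coeff[OF k])
  then have "(G_fun w k has_field_derivative (\<Sum>n. diffs (G_coeff w k) n * r ^ n)) (at r within A)"
    unfolding G_fun_def[abs_def] by (simp add: has_field_derivative_powser)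
  moreover have "diffs (G_coeff w k) = exp_pow_coeff (- w) k"
    by (simp add: fun_eq_iff diffs_def G_coeff_def)
  moreover have "(\<Sum>n. exp_pow_coeff (- w) k n * r ^ n) = exp (- w * r ^ k)"
    using exp_pow_coeff_sums[OF k] by (rule sums_unique[symmetric])
  ultimately show ?thesis by simp
qed

lemma G_fun_strict_mono:
  assumes k: "0 < k" and "r < s"
  shows "G_fun w k r < G_fun w k s"
  using assms(2) by (rule DERIV_pos_imp_increasing) (metis G_fun_has_derivative[OF k] exp_gt_zero)

lemma G_fun_le:
  assumes k: "0 < k" and w: "0 \<le> w" and r: "0 \<le> r"
  shows "G_fun w k r \<le> r"
proof -
  have "(\<lambda>r. r - G_fun w k r) 0 \<le> (\<lambda>r. r - G_fun w k r) r"
  proof (rule DERIV_nonneg_imp_nondecreasing[OF r])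
    fix x :: real assume x: "0 \<le> x" "x \<le> r"
    have "((\<lambda>r. r - G_fun w k r) has_real_derivative 1 - exp (- w * x ^ k)) (at x)"
      by (rule DERIV_diff[OF DERIV_ident G_fun_has_derivative[OF k]])
    moreover have "exp (- w * x ^ k) \<le> 1" using w x by simp
    ultimately show "\<exists>y. ((\<lambda>r. r - G_fun w k r) has_real_derivative y) (at x) \<and> 0 \<le> y"
      by force
  qed
  then show ?thesis by simp
qed

lemma G_fun_ge:
  assumes k: "0 < k" and r: "0 \<le> r"
  shows "r - w * r ^ (k + 1) / real (k + 1) \<le> G_fun w k r"
proof -
  let ?h = "\<lambda>r. G_fun w k r - r + w * r ^ (k + 1) / real (k + 1)"
  have "?h 0 \<le> ?h r"
  proof (rule DERIV_nonneg_imp_nondecreasing[OF r])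
    fix x :: real assume x: "0 \<le> x" "x \<le> r"
    have pow: "((\<lambda>r. r ^ (k + 1)) has_real_derivative real (k + 1) * x ^ k) (at x)"
      using DERIV_pow[of "k + 1" x] by simp
    have "((\<lambda>r. w * r ^ (k + 1) / real (k + 1)) has_real_derivative w * x ^ k) (at x)"
      by (rule DERIV_cong[OF DERIV_cdivide[OF DERIV_cmult[OF pow, where c = w], where c = "real (k + 1)"]]) simp
    then have "(?h has_real_derivative exp (- w * x ^ k) - 1 + w * x ^ k) (at x)"
      by (rule DERIV_add[OF DERIV_diff[OF G_fun_has_derivative[OF k] DERIV_ident]])
    moreover have "0 \<le> exp (- w * x ^ k) - 1 + w * x ^ k"
      using exp_ge_add_one_self[of "- w * x ^ k"] by simp
    ultimately show "\<exists>y. (?h has_real_derivative y) (at x) \<and> 0 \<le> y" by blast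
  qed
  then show ?thesis by simp
qed

lemma G_fun_eq_1_exists:
  assumes k: "0 < k" and w: "0 \<le> w" and kw: "6 * real k * w \<le> 1"
  shows "\<exists>\<rho>. 1 \<le> \<rho> \<and> \<rho> \<le> 1 + 1 / real k \<and> G_fun w k \<rho> = 1"
proof -
  have "(1 + 1 / real k) ^ k \<le> exp 1"
    by (rule exp_ge_one_plus_x_over_n_power_n) (use k in auto)
  moreover have "1 + 1 / real k \<le> 2" using k by simp
  ultimately have "(1 + 1 / real k) ^ (k + 1) \<le> exp 1 * 2"
    unfolding power_add power_one_right by (intro mult_mono) auto
  also have "\<dots> \<le> 6" using exp_le by simp
  finally have "w * (1 + 1 / real k) ^ (k + 1) / real (k + 1) \<le> w * 6 / real (k + 1)"
    using w by (intro divide_right_mono mult_left_mono) auto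
  also have "\<dots> \<le> 1 / real k" using kw k by (simp add: field_simps)
  finally have "1 \<le> (1 + 1 / real k) - w * (1 + 1 / real k) ^ (k + 1) / real (k + 1)" by simp
  also have "\<dots> \<le> G_fun w k (1 + 1 / real k)" by (rule G_fun_ge[OF k]) simp
  finally have right: "1 \<le> G_fun w k (1 + 1 / real k)" .
  have left: "G_fun w k 1 \<le> 1" using G_fun_le[OF k w] by simp
  have "continuous_on {1..1 + 1 / real k} (G_fun w k)"
    by (rule DERIV_continuous_on) (rule G_fun_has_derivative[OF k])
  then have "\<exists>\<rho>\<ge>1. \<rho> \<le> 1 + 1 / real k \<and> G_fun w k \<rho> = 1"
    by (intro IVT'[where f = "G_fun w k"] left right) simp_all
  then show ?thesis by auto
qed

lemma integral_exp_eq_G_fun: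
  assumes k: "0 < k" and r: "0 \<le> r"
  shows "integral {0..r} (\<lambda>v. exp (- w * v ^ k)) = G_fun w k r"
proof -
  have "((\<lambda>v. exp (- w * v ^ k)) has_integral G_fun w k r - G_fun w k 0) {0..r}"
    by (rule fundamental_theorem_of_calculus[OF r])
       (rule G_fun_has_derivative[OF k, THEN has_real_derivative_iff_has_vector_derivative[THEN iffD1]])
  then show ?thesis by (simp add: integral_unique)
qed

lemma rho_t_bounds:
  assumes "6 * real (psize t) * wt t \<le> 1"
  shows "1 \<le> rho_t t" "rho_t t \<le> 1 + 1 / real (psize t)"
    "G_fun (wt t) (psize t) (rho_t t) = 1"
proof -
  have w: "0 \<le> wt t" by (simp add: wt_def)
  obtain \<rho> where \<rho>: "1 \<le> \<rho>" "\<rho> \<le> 1 + 1 / real (psize t)" "G_fun (wt t) (psize t) \<rho> = 1"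
    using G_fun_eq_1_exists[OF psize_pos w assms] by blast
  have "{r. 0 < r \<and> integral {0..r} (\<lambda>v. exp (- wt t * v ^ psize t)) = 1} = {\<rho>}"
  proof (intro equalityI subsetI)
    fix r assume "r \<in> {r. 0 < r \<and> integral {0..r} (\<lambda>v. exp (- wt t * v ^ psize t)) = 1}"
    then have "G_fun (wt t) (psize t) r = G_fun (wt t) (psize t) \<rho>"
      using integral_exp_eq_G_fun[OF psize_pos, of r] \<rho>(3) by simp
    then show "r \<in> {\<rho>}"
      using G_fun_strict_mono[OF psize_pos[of t], where w = "wt t" and r = r and s = \<rho>]
        G_fun_strict_mono[OF psize_pos[of t], where w = "wt t" and r = \<rho> and s = r]
      by (cases r \<rho> rule: linorder_cases) auto
  qed (use \<rho> integral_exp_eq_G_fun[OF psize_pos, of \<rho>] in simp)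
  then have "rho_t t = \<rho>" by (simp add: rho_t_def)
  then show "1 \<le> rho_t t" "rho_t t \<le> 1 + 1 / real (psize t)" "G_fun (wt t) (psize t) (rho_t t) = 1"
    using \<rho> by simp_all
qed


section \<open>The tails of G at the singularity\<close>

definition ceil_div :: "nat \<Rightarrow> nat \<Rightarrow> nat" where
  "ceil_div k n = (n + k - 1) div k"

lemma ceil_div_le_iff: "0 < k \<Longrightarrow> ceil_div k n \<le> j \<longleftrightarrow> n \<le> j * k"
proof -
  assume k: "0 < k"
  have "ceil_div k n \<le> j \<longleftrightarrow> (n + k - 1) div k < Suc j"
    by (simp add: ceil_div_def less_Suc_eq_le)
  also have "\<dots> \<longleftrightarrow> n + k - 1 < Suc j * k" using k by (rule div_less_iff_less_mult)
  also have "\<dots> \<longleftrightarrow> n \<le> j * k" using k by auto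
  finally show ?thesis .
qed

lemma le_ceil_div_mult: "0 < k \<Longrightarrow> n \<le> ceil_div k n * k"
  using ceil_div_le_iff[of k n "ceil_div k n"] by simp

lemma real_le_ceil_div_mult: "0 < k \<Longrightarrow> real n \<le> real (ceil_div k n) * real k"
  using le_ceil_div_mult[of k n] by (simp flip: of_nat_mult)

lemma ceil_div_add_le: "0 < k \<Longrightarrow> ceil_div k (a + b) \<le> ceil_div k a + ceil_div k b"
  using ceil_div_le_iff[of k "a + b"] le_ceil_div_mult[of k a] le_ceil_div_mult[of k b]
  by (simp add: add_mult_distrib)

lemma ceil_div_pos: "0 < k \<Longrightarrow> 1 \<le> n \<Longrightarrow> 1 \<le> ceil_div k n"
  using ceil_div_le_iff[of k n 0] by simp

lemma ceil_div_mono: "i \<le> i' \<Longrightarrow> ceil_div k i \<le> ceil_div k i'"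
  unfolding ceil_div_def by (intro div_le_mono) simp

lemma ceil_div_mult: "0 < k \<Longrightarrow> ceil_div k (j * k) = j"
proof -
  assume k: "0 < k"
  have "j * k + k - 1 = (k - 1) + j * k" using k by simp
  then have "ceil_div k (j * k) = ((k - 1) + j * k) div k" by (simp only: ceil_div_def)
  also have "\<dots> = j + (k - 1) div k" by (rule div_mult_self1) (use k in simp)
  also have "\<dots> = j" using k by simp
  finally show ?thesis .
qed

lemma ceil_div_Suc_mult: "0 < k \<Longrightarrow> ceil_div k (Suc (j * k)) = Suc j"
  by (simp add: ceil_div_def)

lemma ceil_div_Suc_not_dvd:
  assumes k: "0 < k" and "\<not> k dvd i"
  shows "ceil_div k (Suc i) = ceil_div k i"
proof -
  have "i \<le> j * k \<longleftrightarrow> Suc i \<le> j * k" for j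
    using assms by (auto simp: le_eq_less_or_eq)
  then have "ceil_div k (Suc i) \<le> j \<longleftrightarrow> ceil_div k i \<le> j" for j
    using ceil_div_le_iff[OF k] by simp
  then show ?thesis by (meson le_antisym le_refl)
qed

text \<open>The term of index j k + 1 of the series of G at \<rho>; all other terms vanish.\<close>
definition G_term :: "real \<Rightarrow> nat \<Rightarrow> real \<Rightarrow> nat \<Rightarrow> real" where
  "G_term w k \<rho> j = (- (w * \<rho> ^ k)) ^ j * \<rho> / (fact j * (1 + real j * real k))"

lemma sum_G_coeff_eq_sum_G_term:
  assumes k: "0 < k"
  shows "(\<Sum>l\<le>i. G_coeff w k l * \<rho> ^ l) = (\<Sum>j<ceil_div k i. G_term w k \<rho> j)"
proof (induction i)
  case 0
  show ?case using k by (simp add: G_coeff_def ceil_div_def)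
next
  case (Suc i)
  show ?case
  proof (cases "k dvd i")
    case True
    then obtain j where j: "i = j * k" by (metis dvd_def mult.commute)
    have "(- (w * \<rho> ^ k)) ^ j = (- w) ^ j * (\<rho> ^ k) ^ j"
      by (simp add: power_mult_distrib[symmetric])
    also have "(\<rho> ^ k) ^ j = \<rho> ^ (j * k)" by (simp add: power_mult[symmetric] mult.commute)
    finally have "(- (w * \<rho> ^ k)) ^ j = (- w) ^ j * \<rho> ^ (j * k)" .
    moreover have "real (Suc (j * k)) = 1 + real j * real k" by simp
    ultimately have "G_coeff w k (Suc i) * \<rho> ^ Suc i = G_term w k \<rho> j"
      using k by (simp add: j G_coeff_def G_term_def exp_pow_coeff_def)
    then show ?thesis using Suc j ceil_div_mult[OF k, of j] ceil_div_Suc_mult[OF k, of j] by simp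
  next
    case False
    then have "G_coeff w k (Suc i) * \<rho> ^ Suc i = 0" by (simp add: G_coeff_def exp_pow_coeff_def)
    then show ?thesis using Suc ceil_div_Suc_not_dvd[OF k False] by simp
  qed
qed

lemma sum_power_atLeastLessThan_le:
  fixes x :: real
  assumes "0 \<le> x" "x \<le> 1 / 2"
  shows "(\<Sum>j\<in>{J..<J'}. x ^ j) \<le> 2 * x ^ J"
proof (cases "J \<le> J'")
  case True
  have "(\<Sum>j\<in>{J..<J'}. x ^ j) = (\<Sum>j<J' - J. x ^ (J + j))"
    using True by (intro sum.reindex_bij_witness[of _ "\<lambda>j. J + j" "\<lambda>j. j - J"]) auto
  also have "\<dots> = x ^ J * ((x ^ (J' - J) - 1) / (x - 1))"
    using assms by (simp add: power_add sum_distrib_left[symmetric] geometric_sum)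
  also have "\<dots> \<le> x ^ J * 2"
  proof (intro mult_left_mono)
    have "2 * x \<le> 1 + x ^ (J' - J)" using assms zero_le_power[of x "J' - J"] by linarith
    then show "(x ^ (J' - J) - 1) / (x - 1) \<le> 2" using assms by (simp add: divide_le_eq)
  qed (use assms in simp)
  finally show ?thesis by simp
qed (use assms in simp)

lemma sum_G_term_tail_le:
  assumes k: "0 < k" and w: "0 \<le> w" and \<rho>: "0 < \<rho>" and x: "w * \<rho> ^ k \<le> 1 / 2"
    and J: "1 \<le> J"
  shows "\<bar>\<Sum>j\<in>{J..<J'}. G_term w k \<rho> j\<bar> \<le> 2 * \<rho> * (w * \<rho> ^ k) ^ J / (real J * real k)"
proof -
  define X where "X = w * \<rho> ^ k"
  have X0: "0 \<le> X" using w \<rho> by (simp add: X_def)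
  have "\<bar>G_term w k \<rho> j\<bar> \<le> \<rho> / (real J * real k) * X ^ j" if j: "J \<le> j" for j
  proof -
    have le: "real J * real k \<le> fact j * (1 + real j * real k)"
      using j mult_right_mono[of "real J" "real j" "real k"]
        mult_mono[of 1 "fact j" "real J * real k" "1 + real j * real k"]
      by auto
    have "\<bar>G_term w k \<rho> j\<bar> = \<rho> * X ^ j / (fact j * (1 + real j * real k))"
      using w \<rho> by (simp add: G_term_def X_def abs_mult power_abs)
    also have "\<dots> \<le> \<rho> * X ^ j / (real J * real k)"
      using le X0 \<rho> J k by (intro divide_left_mono) (auto intro!: mult_pos_pos add_pos_nonneg)
    finally show ?thesis by simp
  qed
  then have "(\<Sum>j\<in>{J..<J'}. \<bar>G_term w k \<rho> j\<bar>) \<le> (\<Sum>j\<in>{J..<J'}. \<rho> / (real J * real k) * X ^ j)"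
    by (intro sum_mono) simp
  then have "\<bar>\<Sum>j\<in>{J..<J'}. G_term w k \<rho> j\<bar> \<le> \<rho> / (real J * real k) * (\<Sum>j\<in>{J..<J'}. X ^ j)"
    by (simp add: sum_distrib_left order_trans[OF sum_abs])
  also have "\<dots> \<le> \<rho> / (real J * real k) * (2 * X ^ J)"
    using sum_power_atLeastLessThan_le[OF X0 x[folded X_def]] \<rho> by (intro mult_left_mono) auto
  also have "\<dots> = 2 * \<rho> * X ^ J / (real J * real k)" by simp
  finally show ?thesis by (simp only: X_def)
qed

lemma G_tail_bound:
  assumes k: "0 < k" and w: "0 \<le> w" and \<rho>: "0 < \<rho>" and G: "G_fun w k \<rho> = 1"
    and x: "w * \<rho> ^ k \<le> 1 / 2" and i: "1 \<le> i"
  shows "\<bar>1 - (\<Sum>l\<le>i. G_coeff w k l * \<rho> ^ l)\<bar>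
           \<le> 2 * \<rho> * (w * \<rho> ^ k) ^ ceil_div k i / (real (ceil_div k i) * real k)"
    (is "_ \<le> ?B")
proof -
  let ?S = "\<lambda>i. \<Sum>l\<le>i. G_coeff w k l * \<rho> ^ l"
  have "(\<lambda>l. G_coeff w k l * \<rho> ^ l) sums 1"
    using summable_sums[OF summable_G_coeff[OF k, of w \<rho>]] G by (simp add: G_fun_def)
  then have "?S \<longlonglongrightarrow> 1" by (simp only: sums_def_le)
  then have lim: "(\<lambda>M. \<bar>?S M - ?S i\<bar>) \<longlonglongrightarrow> \<bar>1 - ?S i\<bar>"
    by (intro tendsto_rabs tendsto_diff tendsto_const)
  have "\<bar>?S M - ?S i\<bar> \<le> ?B" if "i \<le> M" for M
  proof -
    have "ceil_div k i \<le> ceil_div k M" using that by (rule ceil_div_mono)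
    then have "?S M - ?S i = (\<Sum>j\<in>{ceil_div k i..<ceil_div k M}. G_term w k \<rho> j)"
      using sum.atLeastLessThan_concat[of 0 "ceil_div k i" "ceil_div k M" "G_term w k \<rho>"]
      by (simp add: sum_G_coeff_eq_sum_G_term[OF k] atLeast0LessThan)
    then show ?thesis
      using sum_G_term_tail_le[OF k w \<rho> x ceil_div_pos[OF k i]] by simp
  qed
  then show ?thesis by (intro LIMSEQ_le_const2[OF lim]) auto
qed


section \<open>The renewal equation\<close>

definition ln_recip_one_minus :: "real fps \<Rightarrow> real fps" where
  "ln_recip_one_minus G = - (fps_ln 1 oo (- G))"

lemma fps_nth_S_fps:
  "fps_nth (S_fps t) n = fps_nth (ln_recip_one_minus (G_fps t)) n - (if n = psize t then wt t else 0)"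
  by (simp add: S_fps_def ln_recip_one_minus_def)

lemma fps_deriv_ln_recip_one_minus:
  assumes G0: "fps_nth G 0 = 0"
  shows "fps_deriv (ln_recip_one_minus G) * (1 - G) = fps_deriv G"
proof -
  have mG0: "fps_nth (- G) 0 = 0" using G0 by simp
  define A where "A = inverse (1 + fps_X) oo (- G)"
  define B where "B = (1 + fps_X) oo (- G)"
  have d: "fps_deriv (ln_recip_one_minus G) = A * fps_deriv G"
    using fps_compose_deriv[OF mG0, of "fps_ln 1"]
    by (simp add: fps_ln_deriv A_def ln_recip_one_minus_def)
  have b: "1 - G = B"
    using mG0 by (simp add: fps_compose_add_distrib B_def)
  have "A * B = (inverse (1 + fps_X) * (1 + fps_X)) oo (- G)"
    unfolding A_def B_def by (rule fps_compose_mult_distrib[OF mG0, symmetric])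
  also have "inverse (1 + fps_X) * (1 + fps_X) = (1 :: real fps)"
    by (rule inverse_mult_eq_1) simp
  finally have "A * B = 1" by simp
  then show ?thesis unfolding d b by (simp add: mult_ac)
qed

lemma fps_nth_deriv_ln_recip_one_minus:
  assumes G0: "fps_nth G 0 = 0"
  defines "d \<equiv> fps_deriv (ln_recip_one_minus G)"
  shows "fps_nth d m = real (m + 1) * fps_nth G (m + 1) + (\<Sum>i=1..m. fps_nth G i * fps_nth d (m - i))"
proof -
  have "fps_nth d m - (\<Sum>i=1..m. fps_nth G i * fps_nth d (m - i)) = fps_nth ((1 - G) * d) m"
    using G0 by (simp add: fps_mult_nth sum.atLeast_Suc_atMost sum_negf[symmetric])
  also have "\<dots> = real (m + 1) * fps_nth G (m + 1)"
    using fps_deriv_ln_recip_one_minus[OF G0] by (simp add: d_def mult.commute)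
  finally show ?thesis by (simp add: algebra_simps)
qed

text \<open>The coefficient form of T(z) a(z) = p'(z) / (1 - z) for the renewal sequence a with
  increments p and tails T.\<close>
lemma renewal_tail_convolution:
  fixes p a T :: "nat \<Rightarrow> real"
  assumes p0: "p 0 = 0"
    and T: "\<And>i. T i = 1 - (\<Sum>l\<le>i. p l)"
    and rec: "\<And>m. a m = real (m + 1) * p (m + 1) + (\<Sum>i=1..m. p i * a (m - i))"
  shows "(\<Sum>i=0..m. T i * a (m - i)) = (\<Sum>i=0..m. T i) - real (m + 1) * T (m + 1)"
proof -
  have T0: "T 0 = 1" using T p0 by simp
  have TS: "T (Suc i) = T i - p (Suc i)" for i using T by simp
  show ?thesis
  proof (induction m)
    case 0
    show ?case using T0 TS[of 0] rec[of 0] by simp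
  next
    case (Suc m)
    have "(\<Sum>i=0..Suc m. T i * a (Suc m - i))
            = T 0 * a (Suc m) + (\<Sum>i=Suc 0..Suc m. T i * a (Suc m - i))"
      by (simp add: sum.atLeast_Suc_atMost)
    also have "(\<Sum>i=Suc 0..Suc m. T i * a (Suc m - i)) = (\<Sum>i=0..m. T (Suc i) * a (m - i))"
      by (subst sum.shift_bounds_cl_Suc_ivl) simp
    also have "\<dots> = (\<Sum>i=0..m. T i * a (m - i)) - (\<Sum>i=0..m. p (Suc i) * a (m - i))"
      by (simp add: TS algebra_simps sum_subtractf)
    also have "(\<Sum>i=0..m. p (Suc i) * a (m - i)) = (\<Sum>i=Suc 0..Suc m. p i * a (Suc m - i))"
      by (subst sum.shift_bounds_cl_Suc_ivl) simp
    also have "T 0 * a (Suc m) = real (Suc m + 1) * p (Suc m + 1) + (\<Sum>i=1..Suc m. p i * a (Suc m - i))"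
      using T0 rec[of "Suc m"] by simp
    finally have "(\<Sum>i=0..Suc m. T i * a (Suc m - i))
                    = real (Suc m + 1) * p (Suc m + 1) + (\<Sum>i=0..m. T i * a (m - i))"
      by simp
    also have "\<dots> = real (Suc m + 1) * p (Suc m + 1) + (\<Sum>i=0..m. T i) - real (m + 1) * T (m + 1)"
      using Suc by simp
    also have "\<dots> = (\<Sum>i=0..Suc m. T i) - real (Suc m + 1) * T (Suc m + 1)"
    proof -
      have "T (Suc m) = T (Suc (Suc m)) + p (Suc (Suc m))" using TS[of "Suc m"] by simp
      then show ?thesis by (simp add: sum.atLeast0_atMost_Suc algebra_simps)
    qed
    finally show ?case .
  qed
qed

lemma renewal_error_recurrence:
  fixes p a T :: "nat \<Rightarrow> real"
  assumes p0: "p 0 = 0"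
    and T: "\<And>i. T i = 1 - (\<Sum>l\<le>i. p l)"
    and rec: "\<And>m. a m = real (m + 1) * p (m + 1) + (\<Sum>i=1..m. p i * a (m - i))"
  shows "a m - 1 = - real (m + 1) * T (m + 1) - (\<Sum>i=1..m. T i * (a (m - i) - 1))"
proof -
  have T0: "T 0 = 1" using T p0 by simp
  have "(\<Sum>i=0..m. T i * a (m - i)) = a m + (\<Sum>i=1..m. T i) + (\<Sum>i=1..m. T i * (a (m - i) - 1))"
    using T0 by (simp add: sum.atLeast_Suc_atMost algebra_simps sum.distrib sum_subtractf)
  moreover have "(\<Sum>i=0..m. T i) = 1 + (\<Sum>i=1..m. T i)"
    using T0 by (simp add: sum.atLeast_Suc_atMost)
  ultimately show ?thesis using renewal_tail_convolution[OF p0 T rec, of m] by (simp add: algebra_simps)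
qed

lemma renewal_recurrence_scale:
  fixes g d :: "nat \<Rightarrow> real" and \<rho> :: real
  assumes rec: "\<And>m. d m = real (m + 1) * g (m + 1) + (\<Sum>i=1..m. g i * d (m - i))"
  shows "d m * \<rho> ^ (m + 1) = real (m + 1) * (g (m + 1) * \<rho> ^ (m + 1))
           + (\<Sum>i=1..m. (g i * \<rho> ^ i) * (d (m - i) * \<rho> ^ (m - i + 1)))"
proof -
  have "d m * \<rho> ^ (m + 1) = (real (m + 1) * g (m + 1) + (\<Sum>i=1..m. g i * d (m - i))) * \<rho> ^ (m + 1)"
    using rec[of m] by simp
  also have "\<dots> = real (m + 1) * (g (m + 1) * \<rho> ^ (m + 1)) + (\<Sum>i=1..m. g i * d (m - i) * \<rho> ^ (m + 1))"
    by (simp add: algebra_simps sum_distrib_right sum_distrib_left)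
  also have "(\<Sum>i=1..m. g i * d (m - i) * \<rho> ^ (m + 1))
               = (\<Sum>i=1..m. (g i * \<rho> ^ i) * (d (m - i) * \<rho> ^ (m - i + 1)))"
  proof (rule sum.cong[OF refl])
    fix i assume "i \<in> {1..m}"
    then have "\<rho> ^ (m + 1) = \<rho> ^ i * \<rho> ^ (m - i + 1)" by (simp add: power_add[symmetric])
    then show "g i * d (m - i) * \<rho> ^ (m + 1) = (g i * \<rho> ^ i) * (d (m - i) * \<rho> ^ (m - i + 1))"
      by simp
  qed
  finally show ?thesis .
qed

lemma sum_exp_power_le:
  assumes k: "16 \<le> k"
  shows "(\<Sum>i=1..m. exp (- 16 / real k) ^ i) \<le> real k / 8"
proof -
  define b where "b = exp (- 16 / real k)"
  have b: "0 \<le> b" "b < 1" using k by (auto simp: b_def)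
  have "(\<Sum>i=1..m. b ^ i) \<le> (\<Sum>i<Suc m. b ^ i)"
    using b by (intro sum_mono2) auto
  also have "\<dots> = (1 - b ^ Suc m) / (1 - b)" using b by (simp add: geometric_sum field_simps)
  also have "\<dots> \<le> 1 / (1 - b)" using b by (intro divide_right_mono) auto
  also have "\<dots> \<le> (real k + 16) / 16"
  proof -
    have "1 + 16 / real k \<le> exp (16 / real k)" by (rule exp_ge_add_one_self)
    then have "b * (1 + 16 / real k) \<le> 1" by (simp add: b_def exp_minus field_simps)
    then have "16 / (real k + 16) \<le> 1 - b" using k by (simp add: field_simps)
    then show ?thesis using b k by (simp add: field_simps)
  qed
  also have "\<dots> \<le> real k / 8" using k by simp
  finally show ?thesis by (simp add: b_def)
qed


lemma renewal_forcing_le: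
  fixes x \<rho> :: real
  assumes k: "0 < k" and x: "0 \<le> x" and \<rho>: "0 < \<rho>" "\<rho> \<le> 2" and n: "1 \<le> n"
  shows "real n * (2 * \<rho> * x ^ ceil_div k n / (real (ceil_div k n) * real k))
           \<le> (exp 16 * x) ^ ceil_div k n / 2"
proof -
  define J where "J = ceil_div k n"
  have J: "1 \<le> J" using ceil_div_pos[OF k n] by (simp add: J_def)
  have "real n * (2 * \<rho> * x ^ J / (real J * real k))
          \<le> real J * real k * (2 * \<rho> * x ^ J / (real J * real k))"
    using real_le_ceil_div_mult[OF k, of n] x \<rho> by (intro mult_right_mono) (auto simp: J_def)
  also have "\<dots> = 2 * \<rho> * x ^ J" using J k by simp
  also have "\<dots> \<le> 8 * x ^ J / 2" using \<rho> x mult_right_mono[of \<rho> 2 "x ^ J"] by simp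
  also have "\<dots> \<le> exp 16 ^ J * x ^ J / 2"
  proof -
    have "(8::real) \<le> 1 + 16" by simp
    also have "\<dots> \<le> exp 16" by (rule exp_ge_add_one_self)
    also have "\<dots> \<le> exp 16 ^ J" using J by (simp add: power_increasing[of 1 J, simplified])
    finally show ?thesis using x by (intro divide_right_mono mult_right_mono) auto
  qed
  finally show ?thesis by (simp add: J_def power_mult_distrib)
qed

lemma renewal_term_le:
  fixes T e x y \<rho> :: real
  assumes k: "0 < k" and x: "0 \<le> x" and y: "y = exp 16 * x" "y \<le> 1" and \<rho>: "0 < \<rho>"
    and i: "1 \<le> i" "i \<le> m"
    and T: "\<bar>T\<bar> \<le> 2 * \<rho> * x ^ ceil_div k i / (real (ceil_div k i) * real k)"
    and e: "\<bar>e\<bar> \<le> y ^ ceil_div k (m - i + 1)"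
  shows "\<bar>T\<bar> * \<bar>e\<bar> \<le> 2 * \<rho> / real k * exp (- 16 / real k) ^ i * y ^ ceil_div k (m + 1)"
proof -
  define J where "J = ceil_div k i"
  define J' where "J' = ceil_div k (m - i + 1)"
  have y0: "0 \<le> y" using x y by simp
  have J: "1 \<le> J" using ceil_div_pos[OF k i(1)] by (simp add: J_def)
  have "2 * \<rho> * x ^ J / (real J * real k) \<le> 2 * \<rho> * x ^ J / real k"
    using J k x \<rho> by (intro divide_left_mono) auto
  then have "\<bar>T\<bar> \<le> 2 * \<rho> * x ^ J / real k" using T by (simp add: J_def)
  then have "\<bar>T\<bar> * \<bar>e\<bar> \<le> 2 * \<rho> * x ^ J / real k * y ^ J'"
    using e y0 by (intro mult_mono) (auto simp: J'_def)
  also have "\<dots> = 2 * \<rho> / real k * exp (- 16 * real J) * (y ^ J * y ^ J')"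
    using y by (simp add: power_mult_distrib exp_of_nat_mult[symmetric] exp_minus field_simps)
  also have "\<dots> \<le> 2 * \<rho> / real k * exp (- 16 / real k) ^ i * y ^ ceil_div k (m + 1)"
  proof (intro mult_mono mult_left_mono)
    have "real i \<le> real J * real k" using real_le_ceil_div_mult[OF k, of i] by (simp add: J_def)
    then have "- 16 * real J \<le> - 16 / real k * real i" using k by (simp add: field_simps)
    then show "exp (- 16 * real J) \<le> exp (- 16 / real k) ^ i"
      by (simp add: exp_of_nat_mult[symmetric] mult.commute)
    have "ceil_div k (m + 1) \<le> J + J'"
      using ceil_div_add_le[OF k, of i "m - i + 1"] i by (simp add: J_def J'_def)
    then show "y ^ J * y ^ J' \<le> y ^ ceil_div k (m + 1)"
      by (simp add: power_add[symmetric] power_decreasing y0 y(2))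
  qed (use \<rho> k y0 in auto)
  finally show ?thesis .
qed

text \<open>Writing x^J = exp (-16 J) y^J, the i-th convolution term gains a factor exp (-16/k)^i; these
  sum to at most k/8, which the factor 1/k of the tail bound absorbs.\<close>
lemma renewal_error_bound:
  fixes T e :: "nat \<Rightarrow> real" and x y \<rho> :: real
  assumes k: "16 \<le> k" and x: "0 \<le> x" and y: "y = exp 16 * x" "y \<le> 1"
    and \<rho>: "0 < \<rho>" "\<rho> \<le> 2"
    and T: "\<And>i. 1 \<le> i \<Longrightarrow> \<bar>T i\<bar> \<le> 2 * \<rho> * x ^ ceil_div k i / (real (ceil_div k i) * real k)"
    and rec: "\<And>m. e m = - real (m + 1) * T (m + 1) - (\<Sum>i=1..m. T i * e (m - i))"
  shows "\<bar>e m\<bar> \<le> y ^ ceil_div k (m + 1)"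
proof (induction m rule: less_induct)
  case (less m)
  define J where "J = ceil_div k (m + 1)"
  have k0: "0 < k" using k by simp
  have y0: "0 \<le> y" using x y by simp
  have "real (m + 1) * \<bar>T (m + 1)\<bar> \<le> y ^ J / 2"
    using mult_left_mono[OF T[of "m + 1"], of "real (m + 1)"] renewal_forcing_le[OF k0 x \<rho>, of "m + 1"]
    by (simp add: J_def y(1))
  moreover have "(\<Sum>i=1..m. \<bar>T i\<bar> * \<bar>e (m - i)\<bar>) \<le> y ^ J / 2"
  proof -
    have "(\<Sum>i=1..m. \<bar>T i\<bar> * \<bar>e (m - i)\<bar>)
            \<le> (\<Sum>i=1..m. 2 * \<rho> / real k * exp (- 16 / real k) ^ i * y ^ J)"
      using renewal_term_le[OF k0 x y \<rho>(1) _ _ T less.IH] by (intro sum_mono) (auto simp: J_def)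
    also have "\<dots> = 2 * \<rho> / real k * y ^ J * (\<Sum>i=1..m. exp (- 16 / real k) ^ i)"
      by (simp add: sum_distrib_left sum_distrib_right algebra_simps)
    also have "\<dots> \<le> 2 * \<rho> / real k * y ^ J * (real k / 8)"
      using sum_exp_power_le[OF k] \<rho> y0 by (intro mult_left_mono) auto
    also have "\<dots> = \<rho> / 4 * y ^ J" using k0 by simp
    also have "\<dots> \<le> y ^ J / 2" using \<rho> y0 mult_right_mono[of \<rho> 2 "y ^ J"] by (simp add: mult.commute)
    finally show ?thesis .
  qed
  moreover have "\<bar>e m\<bar> \<le> real (m + 1) * \<bar>T (m + 1)\<bar> + (\<Sum>i=1..m. \<bar>T i\<bar> * \<bar>e (m - i)\<bar>)"
  proof -
    have "\<bar>e m\<bar> \<le> \<bar>real (m + 1) * T (m + 1)\<bar> + \<bar>\<Sum>i=1..m. T i * e (m - i)\<bar>"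
      by (subst rec) linarith
    also have "\<bar>\<Sum>i=1..m. T i * e (m - i)\<bar> \<le> (\<Sum>i=1..m. \<bar>T i\<bar> * \<bar>e (m - i)\<bar>)"
      by (rule order_trans[OF sum_abs]) (simp add: abs_mult)
    finally show ?thesis by (simp add: abs_mult)
  qed
  ultimately show ?case unfolding J_def by simp
qed


section \<open>Asymptotics of the coefficients\<close>

lemma ln_recip_one_minus_coeff_error:
  fixes t :: ptree and \<rho> :: real
  defines "k \<equiv> psize t" and "w \<equiv> wt t"
  assumes k: "16 \<le> k" and \<rho>: "0 < \<rho>" "\<rho> \<le> 2" and G: "G_fun w k \<rho> = 1"
    and y: "exp 16 * (w * \<rho> ^ k) \<le> 1 / 2"
  shows "\<bar>real (Suc m) * fps_nth (ln_recip_one_minus (G_fps t)) (Suc m) * \<rho> ^ Suc m - 1\<bar>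
           \<le> (exp 16 * (w * \<rho> ^ k)) ^ ceil_div k (Suc m)"
proof -
  define d where "d m = fps_nth (fps_deriv (ln_recip_one_minus (G_fps t))) m" for m
  define p where "p l = G_coeff w k l * \<rho> ^ l" for l
  define T where "T i = 1 - (\<Sum>l\<le>i. p l)" for i
  define a where "a m = d m * \<rho> ^ (m + 1)" for m
  have w: "0 \<le> w" by (simp add: w_def wt_def)
  have x: "0 \<le> w * \<rho> ^ k" "w * \<rho> ^ k \<le> 1 / 2"
    using w \<rho> y mult_right_mono[of 1 "exp 16" "w * \<rho> ^ k"] by auto
  have G_nth: "fps_nth (G_fps t) l = G_coeff w k l" for l
    by (simp add: fps_nth_G_fps k_def w_def)
  have G0: "fps_nth (G_fps t) 0 = 0" by (simp add: G_nth G_coeff_def)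
  have "d m = real (m + 1) * G_coeff w k (m + 1) + (\<Sum>i=1..m. G_coeff w k i * d (m - i))" for m
    using fps_nth_deriv_ln_recip_one_minus[OF G0, of m] by (simp add: d_def G_nth)
  then have arec: "a m = real (m + 1) * p (m + 1) + (\<Sum>i=1..m. p i * a (m - i))" for m
    unfolding a_def p_def by (rule renewal_recurrence_scale)
  have p0: "p 0 = 0" by (simp add: p_def G_coeff_def)
  have rec: "a m - 1 = - real (m + 1) * T (m + 1) - (\<Sum>i=1..m. T i * (a (m - i) - 1))" for m
    by (rule renewal_error_recurrence[OF p0 T_def arec])
  have tail: "\<bar>T i\<bar> \<le> 2 * \<rho> * (w * \<rho> ^ k) ^ ceil_div k i / (real (ceil_div k i) * real k)"
    if "1 \<le> i" for i
    using G_tail_bound[OF _ w \<rho>(1) G x(2) that] k by (simp add: T_def p_def)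
  have "\<bar>a m - 1\<bar> \<le> (exp 16 * (w * \<rho> ^ k)) ^ ceil_div k (m + 1)"
    by (rule renewal_error_bound[OF k x(1) refl _ \<rho> tail rec]) (use y in simp)
  then show ?thesis by (simp add: a_def d_def algebra_simps)
qed

lemma large_tree_rho_t:
  assumes "256 \<le> psize t"
  shows "real (psize t) * wt t \<le> 1 / 8" "1 \<le> rho_t t" "rho_t t \<le> 2"
    "G_fun (wt t) (psize t) (rho_t t) = 1" "rho_t t ^ psize t \<le> 3"
proof -
  let ?k = "real (psize t)"
  have "16 \<le> sqrt ?k" using assms by (intro real_le_rsqrt) simp
  moreover have "0 \<le> ?k * wt t" by (simp add: wt_def)
  ultimately have "?k * wt t * 16 \<le> ?k * wt t * sqrt ?k" by (intro mult_left_mono)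
  also have "\<dots> \<le> 2" using wt_sqrt_bound assms by simp
  finally show kw: "?k * wt t \<le> 1 / 8" by linarith
  then have \<rho>: "1 \<le> rho_t t" "rho_t t \<le> 1 + 1 / ?k" "G_fun (wt t) (psize t) (rho_t t) = 1"
    using rho_t_bounds[of t] by simp_all
  then show "1 \<le> rho_t t" "G_fun (wt t) (psize t) (rho_t t) = 1" by simp_all
  have "1 / ?k \<le> 1" using assms by simp
  then show "rho_t t \<le> 2" using \<rho>(2) by linarith
  have "rho_t t ^ psize t \<le> (1 + 1 / ?k) ^ psize t" using \<rho> by (intro power_mono) auto
  also have "\<dots> \<le> exp 1" using assms by (intro exp_ge_one_plus_x_over_n_power_n) auto
  also have "\<dots> \<le> 3" by (rule exp_le)
  finally show "rho_t t ^ psize t \<le> 3" .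
qed

lemma psize_wt_rho_t_power_le:
  assumes "256 \<le> psize t"
  shows "real (psize t) * wt t * rho_t t ^ psize t \<le> 6 / sqrt (real (psize t))"
proof -
  have "real (psize t) * wt t * rho_t t ^ psize t \<le> real (psize t) * wt t * 3"
    using large_tree_rho_t(5)[OF assms] by (intro mult_left_mono) (simp_all add: wt_def)
  also have "\<dots> \<le> 6 / sqrt (real (psize t))"
    using wt_sqrt_bound[of t] assms by (simp add: field_simps)
  finally show ?thesis .
qed

lemma power_le_divide_exponent:
  fixes y :: real
  assumes "0 \<le> y" "y \<le> 1 / 2" "1 \<le> J"
  shows "y ^ J \<le> y / real J"
  using assms(3)
proof (induction J rule: nat_induct_at_least)
  case (Suc J)
  have "y ^ Suc J = y * y ^ J" by simp
  also have "\<dots> \<le> 1 / 2 * (y / real J)"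
    using Suc assms(1,2) by (intro mult_mono) auto
  also have "\<dots> \<le> y / real (Suc J)"
    using Suc assms(1) mult_left_mono[of 1 "real J" y] by (simp add: field_simps)
  finally show ?case .
qed simp

lemma ln_recip_one_minus_coeff_asymp:
  assumes k: "300000000 \<le> psize t" and n: "1 \<le> n"
  shows "\<bar>real n * fps_nth (ln_recip_one_minus (G_fps t)) n * rho_t t ^ n - 1\<bar> \<le> 3 ^ 17 / real n"
proof -
  define y where "y = exp 16 * (wt t * rho_t t ^ psize t)"
  define J where "J = ceil_div (psize t) n"
  have t: "real (psize t) * wt t \<le> 1 / 8" "1 \<le> rho_t t" "rho_t t \<le> 2"
    "G_fun (wt t) (psize t) (rho_t t) = 1" "rho_t t ^ psize t \<le> 3"
    using large_tree_rho_t k by simp_all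
  have w: "0 \<le> wt t" by (simp add: wt_def)
  have "exp (16::real) \<le> 3 ^ 16"
    using power_mono[OF exp_le, of 16] by (simp add: exp_of_nat_mult[symmetric])
  then have "y \<le> 3 ^ 16 * (wt t * 3)"
    unfolding y_def using t(5) w zero_le_power[of "rho_t t" "psize t"] t(2) by (intro mult_mono) auto
  then have "y * real (psize t) \<le> 3 ^ 16 * (wt t * 3) * real (psize t)"
    by (rule mult_right_mono) simp
  also have "\<dots> = 3 ^ 17 * (real (psize t) * wt t)" by simp
  also have "\<dots> \<le> 3 ^ 17 * (1 / 8)" using t(1) by (intro mult_left_mono) auto
  finally have yk: "y * real (psize t) \<le> 3 ^ 17 / 8" by simp
  have y0: "0 \<le> y" unfolding y_def using w t(2) by simp
  then have "y * 300000000 \<le> y * real (psize t)" using k by (intro mult_left_mono) auto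
  then have y: "0 \<le> y" "y \<le> 1 / 2" using y0 yk by simp_all
  have J: "1 \<le> J" "real n \<le> real J * real (psize t)"
    using ceil_div_pos[OF psize_pos n] real_le_ceil_div_mult[OF psize_pos] by (simp_all add: J_def)
  have "\<bar>real n * fps_nth (ln_recip_one_minus (G_fps t)) n * rho_t t ^ n - 1\<bar> \<le> y ^ J"
    using ln_recip_one_minus_coeff_error[of t "rho_t t" "n - 1"] k t(2-4) y n
    by (simp add: y_def J_def)
  also have "\<dots> \<le> y / real J" using power_le_divide_exponent[OF y J(1)] .
  also have "\<dots> = y * real (psize t) / (real J * real (psize t))" using psize_pos[of t] by simp
  also have "\<dots> \<le> 3 ^ 17 / real n"
    using yk J y(1) n by (intro frac_le) auto
  finally show ?thesis .
qed

lemma S_fps_coeff_error: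
  assumes k: "300000000 \<le> psize t" and n: "psize t \<le> n"
  shows "\<bar>fps_nth (S_fps t) n - rho_t t powr (- real n) / real n\<bar>
           \<le> (3 ^ 17 + 6) * (rho_t t powr (- real n) / real n) / sqrt (real n)"
proof -
  define R where "R = rho_t t powr (- real n) / real n"
  define w where "w = (if n = psize t then wt t else 0)"
  have \<rho>: "1 \<le> rho_t t" using large_tree_rho_t k by simp
  have n1: "1 \<le> n" using k n by simp
  have R: "R = 1 / (rho_t t ^ n * real n)" and R0: "0 < R"
    using \<rho> n1 by (simp_all add: R_def powr_minus_divide powr_realpow)
  have sqrt_n: "sqrt (real n) \<le> real n"
    using n1 real_sqrt_le_mono[of "real n" "real n ^ 2"] by (simp add: power2_eq_square)
  have "\<bar>fps_nth (ln_recip_one_minus (G_fps t)) n - R\<bar>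
          = R * \<bar>real n * fps_nth (ln_recip_one_minus (G_fps t)) n * rho_t t ^ n - 1\<bar>"
    using R0 n1 \<rho> by (simp add: R abs_mult[symmetric] field_simps)
  also have "\<dots> \<le> R * (3 ^ 17 / sqrt (real n))"
  proof (rule mult_left_mono)
    have "3 ^ 17 / real n \<le> 3 ^ 17 / sqrt (real n)"
      using sqrt_n n1 by (intro divide_left_mono) auto
    then show "\<bar>real n * fps_nth (ln_recip_one_minus (G_fps t)) n * rho_t t ^ n - 1\<bar>
                 \<le> 3 ^ 17 / sqrt (real n)"
      using ln_recip_one_minus_coeff_asymp[OF k n1] by linarith
  qed (use R0 in simp)
  finally have f: "\<bar>fps_nth (ln_recip_one_minus (G_fps t)) n - R\<bar> \<le> R * (3 ^ 17 / sqrt (real n))" .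
  have "w \<le> R * (6 / sqrt (real n))"
  proof (cases "n = psize t")
    case True
    have "wt t = R * (real n * wt t * rho_t t ^ n)" using True R \<rho> n1 by simp
    also have "\<dots> \<le> R * (6 / sqrt (real n))"
      using psize_wt_rho_t_power_le[of t] True k R0 by (intro mult_left_mono) simp_all
    finally show ?thesis using True by (simp add: w_def)
  qed (use R0 in \<open>simp add: w_def\<close>)
  moreover have "0 \<le> w" by (simp add: w_def wt_def)
  ultimately have "\<bar>fps_nth (S_fps t) n - R\<bar> \<le> R * (3 ^ 17 / sqrt (real n)) + R * (6 / sqrt (real n))"
    using f by (simp add: fps_nth_S_fps w_def[symmetric] abs_le_iff)
  then show ?thesis by (simp add: R_def add_divide_distrib distrib_left)
qed

theorem lemma2p4:
  "\<exists>D::nat. D > 0 \<and> (\<exists>C N. \<forall>n \<ge> N. \<forall>t. D \<le> psize t \<and> psize t \<le> n \<longrightarrow>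
      \<bar>fps_nth (S_fps t) n - rho_t t powr (- real n) / real n\<bar>
        \<le> C * (rho_t t powr (- real n) / real n) / sqrt (ln (real n)))"
proof (intro exI conjI allI impI)
  show "0 < (300000000::nat)" by simp
  fix n :: nat and t
  assume "0 \<le> n" and t: "300000000 \<le> psize t \<and> psize t \<le> n"
  let ?R = "rho_t t powr (- real n) / real n"
  have "0 < ln (real n)" "ln (real n) \<le> real n"
    using t ln_le_minus_one[of "real n"] by auto
  then have "(3 ^ 17 + 6) * ?R / sqrt (real n) \<le> (3 ^ 17 + 6) * ?R / sqrt (ln (real n))"
    by (intro divide_left_mono) auto
  then show "\<bar>fps_nth (S_fps t) n - ?R\<bar> \<le> (3 ^ 17 + 6) * ?R / sqrt (ln (real n))"
    using S_fps_coeff_error[of t n] t by simp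
qed

end
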